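(* Consider, for a constant $A=\lambda\neq0$ and smooth functions $B,C$, the equation $$u_t=\big[\lambda u_{xx}+B(u)u_x+C(u)\big]_x\tag{E}$$ and the system $$v_t=\lambda u_{xx}+B(u)u_x+C(u),\qquad v_x=u,\qquad v_{xx}=u_x.\tag{S'}$$ The system of determining equations for Lie symmetries $X=\xi^0\partial_t+\xi^1\partial_x+\eta\partial_u$ of (E) (with $\xi^0=\xi^0(t)$, $\xi^1=\xi^1(t,x)$, $\eta=\alpha(t,x)u+\beta(t,x)$) $$\begin{aligned} &(\alpha_x+\xi^1_{xx})A'=0,\quad (\alpha u+\beta)A'=(3\xi^1_x-\xi^0_t)A,\quad (\alpha u+\beta)B'=(2\xi^1_x-\xi^0_t)B-3\alpha_x A,\\ &(\alpha_x+\xi^1_{xx})C'=(\alpha_{xx}+\xi^1_{xxx})B-(\alpha_{xxx}+\xi^1_{xxxx})A+\alpha_t+\xi^1_{xt},\\ &(\alpha_x u+\beta_x)C'=-(\alpha_{xx}u+\beta_{xx})B-(\alpha_{xxx}u+\beta_{xxx})A+\alpha_t u+\beta_t, \end{aligned}$$ is NOT equivalent to the system of determining equations for Lie symmetries $X=\xi^0\partial_t+\xi^1\partial_x+\eta^1\partial_u+\eta^2\partial_v$ of (S') (with $\xi^0=\xi^0(t)$, $\xi^1=\xi^1(t,x)$, $\eta^1=\alpha(t,x,v)u+\beta(t,x,v)$, $\eta^2=\eta^2(t,x,v)$) $$\begin{aligned} &(\alpha u+\beta)A'=(3\xi^1_x-\xi^0_t)A,\quad (\alpha u+\beta)B'=(2\xi^1_x-\xi^0_t)B-3(\alpha_v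 u+\alpha_x)A,\\ &(\alpha u+\beta)C'=(\alpha+\xi^1_x-\xi^0_t)C-\big[\alpha_v u^2+(2\alpha_x+\xi^1_{xx})u+\beta_x\big]B\\ &\qquad-\big[\alpha_{vv}u^3+3\alpha_{vx}u^2+(3\alpha_{xx}+2\xi^1_{xxx})u+\beta_{xx}\big]A-\xi^1_t u+\eta^2_t,\\ &\eta^2_v=\alpha+\xi^1_x,\qquad \eta^2_x=\beta. \end{aligned}$$ Moreover, for suitably specified functions $B$ and $C$, the latter system produces pure potential symmetries of (E), i.e. Lie symmetries of (S') in which at least one of $\xi^0,\xi^1,\eta^1$ depends genuinely on $v$.
   Context: Here $A'$, $B'$, $C'$ denote derivatives with respect to $u$ (so $A'=0$ when $A=\lambda$) and subscripts denote partial derivatives. The determining equations are those produced by the classical Lie algorithm for infinitesimal invariance; system (S') is the potential system $v_t=\lambda u_{xx}+Bu_x+C$, $v_x=u$ (introduced via $u=v_x$) supplemented by the differential consequence $v_{xx}=u_x$. A Lie symmetry of (S') is a pure potential symmetry of (E) if one of the coefficients of $\partial_t,\partial_x,\partial_u$ depends on $v$. Standing assumption: (E) is nonlinear. *)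

theory Defs
  imports "HOL-Analysis.Analysis"
begin

definition smooth1 :: "(real \<Rightarrow> real) \<Rightarrow> bool" where
  "smooth1 f \<longleftrightarrow> (\<forall>n x. (deriv ^^ n) f differentiable at x)"

definition pd2_t :: "(real \<Rightarrow> real \<Rightarrow> real) \<Rightarrow> real \<Rightarrow> real \<Rightarrow> real" where
  "pd2_t f = (\<lambda>t x. deriv (\<lambda>s. f s x) t)"
definition pd2_x :: "(real \<Rightarrow> real \<Rightarrow> real) \<Rightarrow> real \<Rightarrow> real \<Rightarrow> real" where
  "pd2_x f = (\<lambda>t x. deriv (\<lambda>y. f t y) x)"

fun iter2 :: "bool list \<Rightarrow> (real \<Rightarrow> real \<Rightarrow> real) \<Rightarrow> real \<Rightarrow> real \<Rightarrow> real" where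
  "iter2 [] f = f"
| "iter2 (d # ds) f = (if d then pd2_t else pd2_x) (iter2 ds f)"

definition smooth2 :: "(real \<Rightarrow> real \<Rightarrow> real) \<Rightarrow> bool" where
  "smooth2 f \<longleftrightarrow> (\<forall>ds t x. (\<lambda>p. iter2 ds f (fst p) (snd p)) differentiable at (t, x))"

definition pd3_t :: "(real \<Rightarrow> real \<Rightarrow> real \<Rightarrow> real) \<Rightarrow> real \<Rightarrow> real \<Rightarrow> real \<Rightarrow> real" where
  "pd3_t f = (\<lambda>t x v. deriv (\<lambda>s. f s x v) t)"
definition pd3_x :: "(real \<Rightarrow> real \<Rightarrow> real \<Rightarrow> real) \<Rightarrow> real \<Rightarrow> real \<Rightarrow> real \<Rightarrow> real" where
  "pd3_x f = (\<lambda>t x v. deriv (\<lambda>y. f t y v) x)"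
definition pd3_v :: "(real \<Rightarrow> real \<Rightarrow> real \<Rightarrow> real) \<Rightarrow> real \<Rightarrow> real \<Rightarrow> real \<Rightarrow> real" where
  "pd3_v f = (\<lambda>t x v. deriv (\<lambda>w. f t x w) v)"

fun iter3 :: "nat list \<Rightarrow> (real \<Rightarrow> real \<Rightarrow> real \<Rightarrow> real) \<Rightarrow> real \<Rightarrow> real \<Rightarrow> real \<Rightarrow> real" where
  "iter3 [] f = f"
| "iter3 (d # ds) f = (if d = 0 then pd3_t else if d = 1 then pd3_x else pd3_v) (iter3 ds f)"

definition smooth3 :: "(real \<Rightarrow> real \<Rightarrow> real \<Rightarrow> real) \<Rightarrow> bool" where
  "smooth3 f \<longleftrightarrow>
     (\<forall>ds t x v. (\<lambda>p. iter3 ds f (fst p) (fst (snd p)) (snd (snd p))) differentiable at (t, x, v))"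

definition detE ::
  "(real \<Rightarrow> real) \<Rightarrow> (real \<Rightarrow> real) \<Rightarrow> (real \<Rightarrow> real) \<Rightarrow>
   (real \<Rightarrow> real) \<Rightarrow> (real \<Rightarrow> real \<Rightarrow> real) \<Rightarrow> (real \<Rightarrow> real \<Rightarrow> real) \<Rightarrow> (real \<Rightarrow> real \<Rightarrow> real) \<Rightarrow> bool"
  where
  "detE A B C xi0 xi1 \<alpha> \<beta> \<longleftrightarrow>
    (\<forall>t x u.
      let X = pd2_x; T = pd2_t; xi0t = deriv xi0 t in
      (X \<alpha> t x + X (X xi1) t x) * deriv A u = 0
    \<and> (\<alpha> t x * u + \<beta> t x) * deriv A u = (3 * X xi1 t x - xi0t) * A u
    \<and> (\<alpha> t x * u + \<beta> t x) * deriv B u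
        = (2 * X xi1 t x - xi0t) * B u - 3 * X \<alpha> t x * A u
    \<and> (X \<alpha> t x + X (X xi1) t x) * deriv C u
        = (X (X \<alpha>) t x + X (X (X xi1)) t x) * B u
          - (X (X (X \<alpha>)) t x + X (X (X (X xi1))) t x) * A u
          + T \<alpha> t x + T (X xi1) t x
    \<and> (X \<alpha> t x * u + X \<beta> t x) * deriv C u
        = - (X (X \<alpha>) t x * u + X (X \<beta>) t x) * B u
          - (X (X (X \<alpha>)) t x * u + X (X (X \<beta>)) t x) * A u
          + T \<alpha> t x * u + T \<beta> t x)"

definition detS ::
  "(real \<Rightarrow> real) \<Rightarrow> (real \<Rightarrow> real) \<Rightarrow> (real \<Rightarrow> real) \<Rightarrow>
   (real \<Rightarrow> real) \<Rightarrow> (real \<Rightarrow> real \<Rightarrow> real) \<Rightarrow>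
   (real \<Rightarrow> real \<Rightarrow> real \<Rightarrow> real) \<Rightarrow> (real \<Rightarrow> real \<Rightarrow> real \<Rightarrow> real) \<Rightarrow> (real \<Rightarrow> real \<Rightarrow> real \<Rightarrow> real) \<Rightarrow> bool"
  where
  "detS A B C xi0 xi1 \<alpha> \<beta> \<eta>2 \<longleftrightarrow>
    (\<forall>t x v u.
      let X = pd3_x; V = pd3_v; T = pd3_t; xi0t = deriv xi0 t;
          xi1x = pd2_x xi1 t x; xi1xx = pd2_x (pd2_x xi1) t x;
          xi1xxx = pd2_x (pd2_x (pd2_x xi1)) t x; xi1t = pd2_t xi1 t x;
          eta1 = \<alpha> t x v * u + \<beta> t x v in
      eta1 * deriv A u = (3 * xi1x - xi0t) * A u
    \<and> eta1 * deriv B u = (2 * xi1x - xi0t) * B u - 3 * (V \<alpha> t x v * u + X \<alpha> t x v) * A u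
    \<and> eta1 * deriv C u
        = (\<alpha> t x v + xi1x - xi0t) * C u
          - (V \<alpha> t x v * u^2 + (2 * X \<alpha> t x v + xi1xx) * u + X \<beta> t x v) * B u
          - (V (V \<alpha>) t x v * u^3 + 3 * V (X \<alpha>) t x v * u^2
             + (3 * X (X \<alpha>) t x v + 2 * xi1xxx) * u + X (X \<beta>) t x v) * A u
          - xi1t * u + T \<eta>2 t x v
    \<and> V \<eta>2 t x v = \<alpha> t x v + xi1x
    \<and> X \<eta>2 t x v = \<beta> t x v)"

definition det_equiv :: "(real \<Rightarrow> real) \<Rightarrow> (real \<Rightarrow> real) \<Rightarrow> (real \<Rightarrow> real) \<Rightarrow> bool" where
  "det_equiv A B C \<longleftrightarrow>
    (\<forall>xi0 xi1 \<alpha> \<beta> \<eta>2. smooth1 xi0 \<and> smooth2 xi1 \<and> smooth3 \<alpha> \<and> smooth3 \<beta> \<and> smooth3 \<eta>2 \<and>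
        detS A B C xi0 xi1 \<alpha> \<beta> \<eta>2 \<longrightarrow>
        (\<forall>t x v w. \<alpha> t x v = \<alpha> t x w \<and> \<beta> t x v = \<beta> t x w) \<and>
        (\<forall>v. detE A B C xi0 xi1 (\<lambda>t x. \<alpha> t x v) (\<lambda>t x. \<beta> t x v)))
  \<and> (\<forall>xi0 xi1 \<alpha> \<beta>. smooth1 xi0 \<and> smooth2 xi1 \<and> smooth2 \<alpha> \<and> smooth2 \<beta> \<and>
        detE A B C xi0 xi1 \<alpha> \<beta> \<longrightarrow>
        (\<exists>\<eta>2. smooth3 \<eta>2 \<and> detS A B C xi0 xi1 (\<lambda>t x v. \<alpha> t x) (\<lambda>t x v. \<beta> t x) \<eta>2))"

text \<open>A pure potential symmetry: a (smooth) Lie symmetry of (S') in which one of the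
  coefficients of d/dt, d/dx, d/du depends on v. Since xi0, xi1 do not depend on v by the
  ansatz, this means eta1 = alpha u + beta depends on v.\<close>
definition pure_potential_symmetry ::
  "(real \<Rightarrow> real) \<Rightarrow> (real \<Rightarrow> real) \<Rightarrow> (real \<Rightarrow> real) \<Rightarrow> bool" where
  "pure_potential_symmetry A B C \<longleftrightarrow>
    (\<exists>xi0 xi1 \<alpha> \<beta> \<eta>2. smooth1 xi0 \<and> smooth2 xi1 \<and> smooth3 \<alpha> \<and> smooth3 \<beta> \<and> smooth3 \<eta>2 \<and>
       detS A B C xi0 xi1 \<alpha> \<beta> \<eta>2 \<and>
       (\<exists>t x v w u. \<alpha> t x v * u + \<beta> t x v \<noteq> \<alpha> t x w * u + \<beta> t x w))"

text \<open>(E) with A = lambda is linear iff B is constant and C is affine.\<close>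
definition nonlinear_E :: "(real \<Rightarrow> real) \<Rightarrow> (real \<Rightarrow> real) \<Rightarrow> bool" where
  "nonlinear_E B C \<longleftrightarrow> \<not> (\<exists>b c0 c1. \<forall>u. B u = b \<and> C u = c0 + c1 * u)"

end

theory Submission
  imports Defs "HOL-Computational_Algebra.Polynomial"
begin

text \<open>
  For \<open>A = \<lambda>\<close>, \<open>B(u) = -3\<lambda>u\<close> and \<open>C(u) = \<lambda>u\<^sup>3 + ku\<close> the potential system (S') admits the
  symmetry \<open>\<xi>\<^sup>0 = \<xi>\<^sup>1 = 0\<close>, \<open>\<eta>\<^sup>1 = e\<^sup>v u\<close>, \<open>\<eta>\<^sup>2 = e\<^sup>v\<close>. Its \<open>\<partial>\<^sub>u\<close>-coefficient depends on \<open>v\<close>, so it is a pure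
  potential symmetry; and a single solution of the (S') system whose \<open>\<alpha>\<close> depends on \<open>v\<close>
  already violates the equivalence of the two determining systems, which would force
  \<open>\<alpha>, \<beta>\<close> to be independent of \<open>v\<close>.
\<close>

lemma deriv_poly: "deriv (poly p) = poly (pderiv (p :: real poly))"
  by (rule ext, rule DERIV_imp_deriv, rule poly_DERIV)

lemma smooth1_poly: "smooth1 (poly (p :: real poly))"
proof -
  have "\<exists>q. (deriv ^^ n) (poly p) = poly q" for n
    by (induction n) (auto simp: deriv_poly)
  then show ?thesis
    unfolding smooth1_def by (metis poly_DERIV real_differentiable_def)
qed

lemma smooth1_const: "smooth1 (\<lambda>_ :: real. c :: real)"
proof -
  have "poly [:c:] = (\<lambda>_ :: real. c)"
    by (rule ext) simp
  then show ?thesis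
    using smooth1_poly[of "[:c:]"] by simp
qed

lemma smooth1_exp: "smooth1 (exp :: real \<Rightarrow> real)"
proof -
  have "deriv exp = (exp :: real \<Rightarrow> real)"
    by (rule ext, rule DERIV_imp_deriv, rule DERIV_exp)
  then have "(deriv ^^ n) exp = (exp :: real \<Rightarrow> real)" for n
    by (induction n) simp_all
  then show ?thesis
    unfolding smooth1_def by (metis DERIV_exp real_differentiable_def)
qed

lemma iter2_const: "iter2 ds (\<lambda>t x. c) = (if ds = [] then (\<lambda>t x. c) else (\<lambda>t x. 0))"
  by (induction ds) (auto simp: pd2_t_def pd2_x_def)

lemma smooth2_const: "smooth2 (\<lambda>t x. c)"
  unfolding smooth2_def iter2_const by simp

lemma iter3_only_v:
  "\<exists>k. iter3 ds (\<lambda>t x v. f v) = (\<lambda>t x v. (deriv ^^ k) f v) \<or> iter3 ds (\<lambda>t x v. f v) = (\<lambda>t x v. 0)"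
proof (induction ds)
  case Nil
  show ?case by (metis funpow_0 iter3.simps(1))
next
  case (Cons d ds)
  then obtain k where "iter3 ds (\<lambda>t x v. f v) = (\<lambda>t x v. (deriv ^^ k) f v) \<or>
      iter3 ds (\<lambda>t x v. f v) = (\<lambda>t x v. 0)" by blast
  then show ?case
  proof
    assume IH: "iter3 ds (\<lambda>t x v. f v) = (\<lambda>t x v. (deriv ^^ k) f v)"
    show ?case
    proof (cases "d \<le> 1")
      case True
      then show ?thesis by (auto simp: IH pd3_t_def pd3_x_def)
    next
      case False
      then have "iter3 (d # ds) (\<lambda>t x v. f v) = (\<lambda>t x v. (deriv ^^ Suc k) f v)"
        by (simp add: IH pd3_v_def)
      then show ?thesis by blast
    qed
  qed (auto simp: pd3_t_def pd3_x_def pd3_v_def)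
qed

lemma smooth3_only_v:
  assumes "smooth1 f"
  shows "smooth3 (\<lambda>t x v. f v)"
  unfolding smooth3_def
proof (intro allI)
  fix ds t x v
  have "(\<lambda>p :: real \<times> real \<times> real. (deriv ^^ k) f (snd (snd p))) differentiable at (t, x, v)" for k
  proof -
    have "(\<lambda>p :: real \<times> real \<times> real. snd (snd p)) differentiable at (t, x, v)"
      by (simp add: bounded_linear_imp_differentiable bounded_linear_compose[OF bounded_linear_snd])
    moreover have "(deriv ^^ k) f differentiable at v"
      using assms unfolding smooth1_def by blast
    ultimately show ?thesis
      using differentiable_chain_at[of "\<lambda>p. snd (snd p)" "(t, x, v)" "(deriv ^^ k) f"]
      by (simp add: o_def)
  qed
  then show "(\<lambda>p. iter3 ds (\<lambda>t x v. f v) (fst p) (fst (snd p)) (snd (snd p))) differentiable at (t, x, v)"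
    using iter3_only_v[of ds f] by auto
qed

lemma pure_potential_symmetry_imp_not_det_equiv:
  assumes "pure_potential_symmetry A B C"
  shows "\<not> det_equiv A B C"
proof
  assume equiv: "det_equiv A B C"
  obtain xi0 xi1 \<alpha> \<beta> \<eta>2 t x v w u where
    symmetry: "smooth1 xi0 \<and> smooth2 xi1 \<and> smooth3 \<alpha> \<and> smooth3 \<beta> \<and> smooth3 \<eta>2 \<and>
      detS A B C xi0 xi1 \<alpha> \<beta> \<eta>2" and
    v_dependent: "\<alpha> t x v * u + \<beta> t x v \<noteq> \<alpha> t x w * u + \<beta> t x w"
    using assms unfolding pure_potential_symmetry_def by blast
  from equiv symmetry have "\<alpha> t x v = \<alpha> t x w \<and> \<beta> t x v = \<beta> t x w"
    unfolding det_equiv_def by blast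
  with v_dependent show False by simp
qed

lemma detS_exp_symmetry:
  "detS (\<lambda>_. lam) (\<lambda>u. -3 * lam * u) (\<lambda>u. lam * u^3 + k * u) (\<lambda>_. 0) (\<lambda>t x. 0)
     (\<lambda>t x v. exp v) (\<lambda>t x v. 0) (\<lambda>t x v. exp v)"
proof -
  have dB: "deriv (\<lambda>u. -3 * lam * u) u = -3 * lam" for u
    by (rule DERIV_imp_deriv) (auto intro!: derivative_eq_intros)
  have dC: "deriv (\<lambda>u. lam * u^3 + k * u) u = 3 * lam * u^2 + k" for u
    by (rule DERIV_imp_deriv) (auto intro!: derivative_eq_intros)
  have dexp: "deriv (\<lambda>w. exp w) v = exp v" for v :: real
    by (rule DERIV_imp_deriv) (rule DERIV_exp)
  show ?thesis
    unfolding detS_def Let_def pd3_t_def pd3_x_def pd3_v_def pd2_t_def pd2_x_def dB dC dexp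
    by (simp add: algebra_simps power2_eq_square power3_eq_cube)
qed

lemma pure_potential_symmetry_example:
  "pure_potential_symmetry (\<lambda>_. lam) (\<lambda>u. -3 * lam * u) (\<lambda>u. lam * u^3 + k * u)"
  unfolding pure_potential_symmetry_def
proof (intro exI conjI)
  show "detS (\<lambda>_. lam) (\<lambda>u. -3 * lam * u) (\<lambda>u. lam * u^3 + k * u) (\<lambda>_. 0) (\<lambda>t x. 0)
      (\<lambda>t x v. exp v) (\<lambda>t x v. 0) (\<lambda>t x v. exp v)"
    by (rule detS_exp_symmetry)
  show "exp 0 * 1 + 0 \<noteq> exp 1 * 1 + (0 :: real)"
    by simp
qed (rule smooth1_const smooth2_const smooth3_only_v[OF smooth1_const]
      smooth3_only_v[OF smooth1_exp])+

lemma nonlinear_E_if_nonconstant: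
  assumes "B a \<noteq> B b"
  shows "nonlinear_E B C"
  using assms unfolding nonlinear_E_def by metis

theorem theorem3:
  shows "\<exists>(lam::real) B C. lam \<noteq> 0 \<and> smooth1 B \<and> smooth1 C \<and> nonlinear_E B C \<and>
           \<not> det_equiv (\<lambda>_. lam) B C \<and> pure_potential_symmetry (\<lambda>_. lam) B C"
proof -
  let ?lam = "1 :: real" and ?k = "0 :: real"
  let ?B = "\<lambda>u. -3 * ?lam * u" and ?C = "\<lambda>u. ?lam * u^3 + ?k * u"
  have "?B = poly [:0, -3 * ?lam:]" and "?C = poly [:0, ?k, 0, ?lam:]"
    by (auto simp: algebra_simps power3_eq_cube)
  then have smooth: "smooth1 ?B" "smooth1 ?C"
    using smooth1_poly by presburger+
  have nonlinear: "nonlinear_E ?B ?C"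
    by (rule nonlinear_E_if_nonconstant[of _ 0 1]) simp
  have pure: "pure_potential_symmetry (\<lambda>_. ?lam) ?B ?C"
    by (rule pure_potential_symmetry_example)
  then have "\<not> det_equiv (\<lambda>_. ?lam) ?B ?C"
    by (rule pure_potential_symmetry_imp_not_det_equiv)
  with smooth nonlinear pure show ?thesis
    by (intro exI[of _ ?lam] exI[of _ ?B] exI[of _ ?C]) simp
qed

end
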